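(* The bracket $\Big[\sum_{(a,n)}P^{a,n}D_{a,n},\sum_{(b,m)}Q^{b,m}D_{b,m}\Big]=\sum_{(a,n),(b,m)\in\mathcal I\times\mathbb Z}\Big(P^{b,m}\frac{\partial Q^{a,n}}{\partial X^{b,m}}-Q^{b,m}\frac{\partial P^{a,n}}{\partial X^{b,m}}\Big)D_{a,n}$ is well defined on $\overline{\mathrm{Der}}\,\mathcal O$ and makes it a Lie algebra, and $\mathrm{Der}_w\mathcal O$ is a Lie subalgebra of $\overline{\mathrm{Der}}\,\mathcal O$.
   Context: $\mathcal I$ is a finite index set, $\mathcal O=\mathbb C[X^{a,n}]_{(a,n)\in\mathcal I\times\mathbb Z}$, $D_{a,n}=\partial/\partial X^{a,n}$. $\overline{\mathrm{Der}}\,\mathcal O=\prod_{(a,n)\in\mathcal I\times\mathbb Z}\mathcal O D_{a,n}$ is the space of possibly infinite formal sums $\sum_{(a,n)}P^{a,n}(X)D_{a,n}$. A collection $\{P^{a,n}\}_{(a,n)\in\mathcal I\times\mathbb Z}$ in $\mathcal O$ has widening gap if for every $K\ge1$, $P^{a,n}\in\mathbb C[X^{b,m}:|m|<|n|-K,\ b\in\mathcal I]$ for all $a$, for all but finitely many $n\in\mathbb Z$. $\mathrm{Der}_w\mathcal O\subset\overline{\mathrm{Der}}\,\mathcal O$ is the subspace of sums whose coefficient collection has widening gap. *)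

theory Defs
  imports Complex_Main "HOL-Library.Poly_Mapping" "HOL-Library.Groups_Big_Fun"
begin

text \<open>Variables X^{a,n} are indexed by pairs (a,n) in I x Z; the finite index set I
  is a type of class finite.  Monomials are finitely supported exponent maps,
  polynomials (the ring O) are finitely supported coefficient maps on monomials.\<close>

type_synonym 'i mon = "('i \<times> int) \<Rightarrow>\<^sub>0 nat"
type_synonym 'i pol = "'i mon \<Rightarrow>\<^sub>0 complex"

text \<open>An element of the completed derivation space: the family of coefficients
  P^{a,n}, representing the formal (possibly infinite) sum of P^{a,n} D_{a,n}.\<close>
type_synonym 'i der = "'i \<times> int \<Rightarrow> 'i pol"

definition const_pol :: "complex \<Rightarrow> 'i pol" where
  "const_pol c = Poly_Mapping.single 0 c"

definition pdiff :: "'i \<times> int \<Rightarrow> 'i pol \<Rightarrow> 'i pol" where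
  "pdiff v p = (\<Sum>m::'i mon\<in>Poly_Mapping.keys p.
      Poly_Mapping.single (m - Poly_Mapping.single v 1)
        (of_nat (Poly_Mapping.lookup m v) * Poly_Mapping.lookup p m))"

definition vars :: "'i pol \<Rightarrow> ('i \<times> int) set" where
  "vars p = (\<Union>m\<in>Poly_Mapping.keys p. Poly_Mapping.keys m)"

definition der_zero :: "'i der" where
  "der_zero = (\<lambda>v. 0)"

definition der_add :: "'i der \<Rightarrow> 'i der \<Rightarrow> 'i der" where
  "der_add P Q = (\<lambda>v. P v + Q v)"

definition der_scale :: "complex \<Rightarrow> 'i der \<Rightarrow> 'i der" where
  "der_scale c P = (\<lambda>v. const_pol c * P v)"

definition bracket_term :: "'i der \<Rightarrow> 'i der \<Rightarrow> 'i \<times> int \<Rightarrow> 'i \<times> int \<Rightarrow> 'i pol" where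
  "bracket_term P Q an bm = P bm * pdiff bm (Q an) - Q bm * pdiff bm (P an)"

text \<open>The bracket: coefficient of D_{a,n} is the sum over all (b,m) of the terms
  (a sum over the support; well-definedness = finiteness of that support).\<close>
definition der_bracket :: "'i der \<Rightarrow> 'i der \<Rightarrow> 'i der" where
  "der_bracket P Q = (\<lambda>an. Sum_any (bracket_term P Q an))"

definition widening_gap :: "'i der \<Rightarrow> bool" where
  "widening_gap P \<longleftrightarrow>
     (\<forall>K::int. K \<ge> 1 \<longrightarrow>
        finite {n::int. \<not> (\<forall>a. \<forall>(b, m) \<in> vars (P (a, n)). \<bar>m\<bar> < \<bar>n\<bar> - K)})"

definition Der_w :: "'i der set" where
  "Der_w = {P. widening_gap P}"

end

theory Submission
  imports Defs
begin

text \<open>A formal sum \<open>P = \<Sum> P^v D_v\<close> acts on a polynomial \<open>f\<close> by the finite sum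
  \<open>P f = \<Sum>_{v \<in> vars f} P^v \<partial>_v f\<close>, and the \<open>(a,n)\<close>-coefficient of \<open>[P,Q]\<close> is
  \<open>P(Q^{a,n}) - Q(P^{a,n})\<close>; only the finitely many variables of \<open>P^{a,n}\<close> and \<open>Q^{a,n}\<close>
  contribute. By the Leibniz rule and the commutation of partial derivatives, \<open>[P,Q]\<close> acts on
  polynomials as the commutator of the actions of \<open>P\<close> and \<open>Q\<close>, and the Lie algebra axioms
  follow coefficientwise.

  The widening gap for \<open>K = 1\<close> yields a constant \<open>C\<close> such that every variable \<open>X^{b',m'}\<close>
  of \<open>P^{b,m}\<close> has \<open>|m'| < max C |m|\<close>. Hence, once \<open>|n| - K \<ge> C\<close>, the variables of
  \<open>P(Q^{a,n})\<close> and \<open>Q(P^{a,n})\<close> have index of absolute value below \<open>|n| - K\<close> whenever those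
  of \<open>P^{a,n}\<close> and \<open>Q^{a,n}\<close> do, which holds for all but finitely many \<open>n\<close>.\<close>

section \<open>Partial derivatives\<close>

lemma eq_add_single_one_iff:
  fixes m k :: "'a \<Rightarrow>\<^sub>0 nat"
  shows "m = k + Poly_Mapping.single v 1 \<longleftrightarrow>
    1 \<le> Poly_Mapping.lookup m v \<and> m - Poly_Mapping.single v 1 = k"
  by (auto simp: poly_mapping_eq_iff fun_eq_iff lookup_add lookup_minus lookup_single when_def)

lemma lookup_pdiff:
  "Poly_Mapping.lookup (pdiff v p) k =
    of_nat (Poly_Mapping.lookup k v + 1) * Poly_Mapping.lookup p (k + Poly_Mapping.single v 1)"
proof -
  have "Poly_Mapping.lookup (pdiff v p) k =
      (\<Sum>m\<in>Poly_Mapping.keys p. if m - Poly_Mapping.single v 1 = k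
         then of_nat (Poly_Mapping.lookup m v) * Poly_Mapping.lookup p m else 0)"
    unfolding pdiff_def lookup_sum by (simp add: lookup_single when_def)
  also have "\<dots> = (\<Sum>m\<in>Poly_Mapping.keys p. if m = k + Poly_Mapping.single v 1
         then of_nat (Poly_Mapping.lookup m v) * Poly_Mapping.lookup p m else 0)"
    by (intro sum.cong refl) (use eq_add_single_one_iff[of _ k v] in auto)
  also have "\<dots> =
      of_nat (Poly_Mapping.lookup k v + 1) * Poly_Mapping.lookup p (k + Poly_Mapping.single v 1)"
    by (simp add: in_keys_iff lookup_add)
  finally show ?thesis .
qed

lemma pdiff_add: "pdiff v (p + q) = pdiff v p + pdiff v q"
  by (rule poly_mapping_eqI) (simp add: lookup_pdiff lookup_add algebra_simps)

lemma pdiff_zero [simp]: "pdiff v 0 = 0"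
  by (rule poly_mapping_eqI) (simp add: lookup_pdiff)

lemma pdiff_sum: "pdiff v (sum f S) = (\<Sum>s\<in>S. pdiff v (f s))"
  by (induction S rule: infinite_finite_induct) (auto simp: pdiff_add)

lemma pdiff_commute: "pdiff u (pdiff v p) = pdiff v (pdiff u p)"
  by (rule poly_mapping_eqI, cases "u = v")
    (auto simp: lookup_pdiff lookup_add lookup_single when_def algebra_simps)

lemma pdiff_single:
  "pdiff v (Poly_Mapping.single m c) =
    Poly_Mapping.single (m - Poly_Mapping.single v 1) (of_nat (Poly_Mapping.lookup m v) * c)"
  by (rule poly_mapping_eqI)
    (use eq_add_single_one_iff[of m _ v] in
      \<open>auto simp: lookup_pdiff lookup_single lookup_minus when_def of_nat_diff\<close>)

text \<open>If \<open>v\<close> does not occur in \<open>m\<close> the coefficient vanishes, so it does not matter that the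
  truncated subtraction \<open>m - single v 1\<close> then fails to commute with adding \<open>n\<close>.\<close>
lemma single_diff_single_one_add:
  fixes m n :: "'i mon"
  shows "Poly_Mapping.single (m - Poly_Mapping.single v 1 + n) (of_nat (Poly_Mapping.lookup m v) * c) =
    (Poly_Mapping.single (m + n - Poly_Mapping.single v 1) (of_nat (Poly_Mapping.lookup m v) * c)
      :: 'i pol)"
proof (cases "Poly_Mapping.lookup m v = 0")
  case False
  then have "m - Poly_Mapping.single v 1 + n = m + n - Poly_Mapping.single v 1"
    by (intro poly_mapping_eqI) (auto simp: lookup_add lookup_minus lookup_single when_def)
  then show ?thesis by simp
qed simp

lemma pdiff_mult_single:
  "pdiff v (Poly_Mapping.single m a * Poly_Mapping.single n b) =
    pdiff v (Poly_Mapping.single m a) * Poly_Mapping.single n b +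
    Poly_Mapping.single m a * pdiff v (Poly_Mapping.single n b)"
  using single_diff_single_one_add[of m v n "a * b"] single_diff_single_one_add[of n v m "a * b"]
  by (simp add: mult_single pdiff_single lookup_add single_add[symmetric] algebra_simps)

lemma pol_eq_sum_single:
  "p = (\<Sum>m\<in>Poly_Mapping.keys p. Poly_Mapping.single m (Poly_Mapping.lookup p m))"
  by (rule poly_mapping_eqI) (simp add: lookup_sum lookup_single when_def in_keys_iff)

lemma pdiff_mult: "pdiff v (p * q) = pdiff v p * q + p * pdiff v (q :: 'i pol)"
proof -
  let ?p = "\<lambda>m. Poly_Mapping.single m (Poly_Mapping.lookup p m)"
  let ?q = "\<lambda>n. Poly_Mapping.single n (Poly_Mapping.lookup q n)"
  have "pdiff v (sum ?p (Poly_Mapping.keys p) * sum ?q (Poly_Mapping.keys q)) =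
      pdiff v (sum ?p (Poly_Mapping.keys p)) * sum ?q (Poly_Mapping.keys q) +
      sum ?p (Poly_Mapping.keys p) * pdiff v (sum ?q (Poly_Mapping.keys q))"
    by (simp add: sum_product pdiff_sum pdiff_mult_single sum.distrib)
  then show ?thesis
    using pol_eq_sum_single[of p] pol_eq_sum_single[of q] by simp
qed

lemma pdiff_not_in_vars:
  fixes p :: "'i pol"
  assumes "v \<notin> vars p"
  shows "pdiff v p = 0"
proof (rule poly_mapping_eqI)
  fix k :: "'i mon"
  have "v \<in> Poly_Mapping.keys (k + Poly_Mapping.single v 1)"
    by (simp add: in_keys_iff lookup_add lookup_single)
  then have "k + Poly_Mapping.single v 1 \<notin> Poly_Mapping.keys p"
    using assms by (auto simp: vars_def)
  then show "Poly_Mapping.lookup (pdiff v p) k = Poly_Mapping.lookup 0 k"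
    by (simp add: lookup_pdiff in_keys_iff)
qed

lemma vars_zero [simp]: "vars 0 = {}"
  by (simp add: vars_def)

lemma vars_const_pol [simp]: "vars (const_pol c) = {}"
  by (simp add: vars_def const_pol_def)

lemma finite_vars [simp]: "finite (vars p)"
  by (simp add: vars_def)

lemma vars_add: "vars (p + q) \<subseteq> vars p \<union> vars q"
  unfolding vars_def using keys_add[of p q] by auto

lemma vars_diff: "vars (p - q) \<subseteq> vars p \<union> vars q"
  unfolding vars_def using keys_diff[of p q] by auto

lemma vars_mult: "vars (p * q) \<subseteq> vars p \<union> vars (q :: 'i pol)"
proof
  fix x assume "x \<in> vars (p * q)"
  then obtain m where m: "m \<in> Poly_Mapping.keys (p * q)" "x \<in> Poly_Mapping.keys m"
    by (auto simp: vars_def)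
  then obtain a b where "m = a + b" "a \<in> Poly_Mapping.keys p" "b \<in> Poly_Mapping.keys q"
    using keys_mult[of p q] by blast
  then show "x \<in> vars p \<union> vars q"
    using m(2) keys_add[of a b] by (auto simp: vars_def)
qed

lemma vars_sum: "vars (sum f S) \<subseteq> (\<Union>s\<in>S. vars (f s))"
  unfolding vars_def using keys_sum[of f S] by blast

lemma vars_pdiff: "vars (pdiff v p) \<subseteq> vars p"
proof
  fix x assume "x \<in> vars (pdiff v p)"
  then obtain k where "k \<in> Poly_Mapping.keys (pdiff v p)" "x \<in> Poly_Mapping.keys k"
    by (auto simp: vars_def)
  then have "k + Poly_Mapping.single v 1 \<in> Poly_Mapping.keys p"
    and "x \<in> Poly_Mapping.keys (k + Poly_Mapping.single v 1)"
    by (auto simp: in_keys_iff lookup_pdiff lookup_add)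
  then show "x \<in> vars p" by (auto simp: vars_def)
qed

section \<open>Formal derivations acting on polynomials\<close>

definition der_apply :: "'i der \<Rightarrow> 'i pol \<Rightarrow> 'i pol" where
  "der_apply P f = (\<Sum>v\<in>vars f. P v * pdiff v f)"

lemma der_apply_eq_sum:
  assumes "finite S" "vars f \<subseteq> S"
  shows "der_apply P f = (\<Sum>v\<in>S. P v * pdiff v f)"
  unfolding der_apply_def
  by (rule sum.mono_neutral_left) (use assms in \<open>auto simp: pdiff_not_in_vars\<close>)

lemma der_apply_zero [simp]: "der_apply P 0 = 0"
  by (simp add: der_apply_def)

lemma der_apply_const_pol [simp]: "der_apply P (const_pol c) = 0"
  by (simp add: der_apply_def)

lemma der_apply_add: "der_apply P (f + g) = der_apply P f + der_apply P g"
proof -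
  let ?S = "vars f \<union> vars g"
  have "der_apply P (f + g) = (\<Sum>v\<in>?S. P v * pdiff v (f + g))"
    using vars_add by (intro der_apply_eq_sum) auto
  also have "\<dots> = (\<Sum>v\<in>?S. P v * pdiff v f) + (\<Sum>v\<in>?S. P v * pdiff v g)"
    by (simp add: pdiff_add distrib_left sum.distrib)
  also have "\<dots> = der_apply P f + der_apply P g"
    using der_apply_eq_sum[of ?S f P] der_apply_eq_sum[of ?S g P] by simp
  finally show ?thesis .
qed

lemma der_apply_diff: "der_apply P (f - g) = der_apply P f - der_apply P g"
  using der_apply_add[of P "f - g" g] by (simp add: eq_diff_eq)

lemma der_apply_sum: "der_apply P (sum f S) = (\<Sum>s\<in>S. der_apply P (f s))"
  by (induction S rule: infinite_finite_induct) (auto simp: der_apply_add)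

lemma der_apply_mult: "der_apply P (f * g) = der_apply P f * g + f * der_apply P g"
proof -
  let ?S = "vars f \<union> vars g"
  have "der_apply P (f * g) = (\<Sum>v\<in>?S. P v * pdiff v (f * g))"
    using vars_mult by (intro der_apply_eq_sum) auto
  also have "\<dots> = (\<Sum>v\<in>?S. P v * pdiff v f) * g + f * (\<Sum>v\<in>?S. P v * pdiff v g)"
    by (simp add: pdiff_mult sum_distrib_left sum_distrib_right sum.distrib algebra_simps)
  also have "\<dots> = der_apply P f * g + f * der_apply P g"
    using der_apply_eq_sum[of ?S f P] der_apply_eq_sum[of ?S g P] by simp
  finally show ?thesis .
qed

lemma der_apply_der_add: "der_apply (der_add P Q) f = der_apply P f + der_apply Q f"
  by (simp add: der_apply_def der_add_def distrib_right sum.distrib)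

lemma der_apply_der_scale: "der_apply (der_scale c P) f = const_pol c * der_apply P f"
  by (simp add: der_apply_def der_scale_def sum_distrib_left mult.assoc)

lemma vars_der_apply: "vars (der_apply P f) \<subseteq> vars f \<union> (\<Union>v\<in>vars f. vars (P v))"
proof -
  have "vars (der_apply P f) \<subseteq> (\<Union>v\<in>vars f. vars (P v * pdiff v f))"
    unfolding der_apply_def by (rule vars_sum)
  also have "\<dots> \<subseteq> vars f \<union> (\<Union>v\<in>vars f. vars (P v))"
  proof (rule UN_least)
    fix v assume "v \<in> vars f"
    then show "vars (P v * pdiff v f) \<subseteq> vars f \<union> (\<Union>v\<in>vars f. vars (P v))"
      using vars_mult[of "P v" "pdiff v f"] vars_pdiff[of v f] by blast
  qed
  finally show ?thesis .
qed

lemma bracket_term_support: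
  "{bm. bracket_term P Q an bm \<noteq> 0} \<subseteq> vars (P an) \<union> vars (Q an)"
proof -
  have "bracket_term P Q an bm = 0" if "bm \<notin> vars (P an) \<union> vars (Q an)" for bm
    using that by (simp add: bracket_term_def pdiff_not_in_vars)
  then show ?thesis by blast
qed

lemma finite_bracket_term_support: "finite {bm. bracket_term P Q an bm \<noteq> 0}"
  by (rule finite_subset[OF bracket_term_support]) simp

lemma der_bracket_eq: "der_bracket P Q an = der_apply P (Q an) - der_apply Q (P an)"
proof -
  let ?S = "vars (P an) \<union> vars (Q an)"
  have "der_bracket P Q an = (\<Sum>bm\<in>?S. bracket_term P Q an bm)"
    unfolding der_bracket_def
    by (rule Sum_any.expand_superset) (use bracket_term_support[of P Q an] in auto)
  also have "\<dots> = der_apply P (Q an) - der_apply Q (P an)"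
    using der_apply_eq_sum[of ?S "Q an" P] der_apply_eq_sum[of ?S "P an" Q]
    by (simp add: bracket_term_def sum_subtractf)
  finally show ?thesis .
qed

lemma der_apply_der_apply:
  "der_apply P (der_apply Q f) = (\<Sum>v\<in>vars f. der_apply P (Q v) * pdiff v f)
    + (\<Sum>v\<in>vars f. \<Sum>u\<in>vars f. Q v * P u * pdiff u (pdiff v f))"
proof -
  have "der_apply P (pdiff v f) = (\<Sum>u\<in>vars f. P u * pdiff u (pdiff v f))" for v
    using vars_pdiff[of v f] by (intro der_apply_eq_sum) auto
  then show ?thesis
    by (simp add: der_apply_def[of Q] der_apply_sum der_apply_mult sum.distrib
        sum_distrib_left mult.assoc)
qed

text \<open>The second-order terms of \<open>P(Q f)\<close> and \<open>Q(P f)\<close> cancel since partial derivatives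
  commute.\<close>
lemma der_apply_der_bracket:
  "der_apply (der_bracket P Q) f = der_apply P (der_apply Q f) - der_apply Q (der_apply P f)"
proof -
  have "(\<Sum>v\<in>vars f. \<Sum>u\<in>vars f. Q v * P u * pdiff u (pdiff v f)) =
      (\<Sum>v\<in>vars f. \<Sum>u\<in>vars f. P v * Q u * pdiff u (pdiff v f))"
    by (subst sum.swap) (simp add: pdiff_commute mult.commute)
  then show ?thesis
    by (simp add: der_apply_def[of "der_bracket P Q"] der_bracket_eq der_apply_der_apply
        left_diff_distrib sum_subtractf)
qed

lemma der_add_apply [simp]: "der_add P Q v = P v + Q v"
  by (simp add: der_add_def)

lemma der_scale_apply [simp]: "der_scale c P v = const_pol c * P v"
  by (simp add: der_scale_def)

lemma der_zero_apply [simp]: "der_zero v = 0"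
  by (simp add: der_zero_def)

lemma der_bracket_add_left:
  "der_bracket (der_add P Q) R = der_add (der_bracket P R) (der_bracket Q R)"
  by (simp add: fun_eq_iff der_bracket_eq der_apply_der_add der_apply_add)

lemma der_bracket_add_right:
  "der_bracket P (der_add Q R) = der_add (der_bracket P Q) (der_bracket P R)"
  by (simp add: fun_eq_iff der_bracket_eq der_apply_der_add der_apply_add)

lemma der_bracket_scale_left:
  "der_bracket (der_scale c P) Q = der_scale c (der_bracket P Q)"
  by (simp add: fun_eq_iff der_bracket_eq der_apply_der_scale der_apply_mult right_diff_distrib)

lemma der_bracket_scale_right:
  "der_bracket P (der_scale c Q) = der_scale c (der_bracket P Q)"
  by (simp add: fun_eq_iff der_bracket_eq der_apply_der_scale der_apply_mult right_diff_distrib)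

lemma der_bracket_self: "der_bracket P P = der_zero"
  by (simp add: fun_eq_iff der_bracket_eq)

lemma der_bracket_jacobi:
  "der_add (der_add (der_bracket P (der_bracket Q R)) (der_bracket Q (der_bracket R P)))
     (der_bracket R (der_bracket P Q)) = der_zero"
  by (simp add: fun_eq_iff der_bracket_eq der_apply_der_bracket der_apply_diff)

section \<open>The widening gap condition\<close>

definition vars_below :: "int \<Rightarrow> 'i pol \<Rightarrow> bool" where
  "vars_below N p \<longleftrightarrow> (\<forall>v\<in>vars p. \<bar>snd v\<bar> < N)"

lemma widening_gap_iff_eventually:
  "widening_gap P \<longleftrightarrow>
    (\<forall>K\<ge>1. \<forall>\<^sub>F n in cofinite. \<forall>a. vars_below (\<bar>n\<bar> - K) (P (a, n)))"
  by (simp add: widening_gap_def vars_below_def eventually_cofinite case_prod_beta)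

lemma vars_below_mono: "vars_below N p \<Longrightarrow> N \<le> M \<Longrightarrow> vars_below M p"
  unfolding vars_below_def by fastforce

lemma vars_below_add: "vars_below N p \<Longrightarrow> vars_below N q \<Longrightarrow> vars_below N (p + q)"
  unfolding vars_below_def using vars_add[of p q] by blast

lemma vars_below_diff: "vars_below N p \<Longrightarrow> vars_below N q \<Longrightarrow> vars_below N (p - q)"
  unfolding vars_below_def using vars_diff[of p q] by blast

lemma vars_below_const_pol_mult: "vars_below N p \<Longrightarrow> vars_below N (const_pol c * p)"
  unfolding vars_below_def using vars_mult[of "const_pol c" p] by auto

lemma vars_below_der_apply:
  fixes P :: "'i der"
  assumes f: "vars_below N f" and P: "\<And>b m. vars_below (max C \<bar>m\<bar>) (P (b, m))"
    and "C \<le> N"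
  shows "vars_below N (der_apply P f)"
  unfolding vars_below_def
proof
  fix x assume "x \<in> vars (der_apply P f)"
  then consider "x \<in> vars f" | b' m' where "(b', m') \<in> vars f" "x \<in> vars (P (b', m'))"
    using vars_der_apply[of P f] by auto
  then show "\<bar>snd x\<bar> < N"
  proof cases
    case 1
    then show ?thesis using f by (auto simp: vars_below_def)
  next
    case 2
    then have "\<bar>m'\<bar> < N" and "\<bar>snd x\<bar> < max C \<bar>m'\<bar>"
      using f P[where b = b' and m = m'] by (auto simp: vars_below_def)
    then show ?thesis using \<open>C \<le> N\<close> by linarith
  qed
qed

lemma widening_gap_vars_bound:
  fixes P :: "'i::finite der"
  assumes "widening_gap P"
  obtains C where "\<And>b m. vars_below (max C \<bar>m\<bar>) (P (b, m))"
proof -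
  define F where "F = {m. \<not> (\<forall>a. vars_below (\<bar>m\<bar> - 1) (P (a, m)))}"
  have "finite F"
    using assms by (simp add: F_def widening_gap_iff_eventually eventually_cofinite)
  define V where "V = (\<Union>b. \<Union>m\<in>F. vars (P (b, m)))"
  have "finite V" using \<open>finite F\<close> by (simp add: V_def)
  define C where "C = Max (insert 0 ((\<lambda>x. \<bar>snd x\<bar>) ` V)) + 1"
  have "vars_below (max C \<bar>m\<bar>) (P (b, m))" for b m
  proof (cases "m \<in> F")
    case True
    have "\<bar>snd x\<bar> \<le> Max (insert 0 ((\<lambda>x. \<bar>snd x\<bar>) ` V))" if "x \<in> vars (P (b, m))" for x
      using \<open>finite V\<close> True that by (intro Max_ge) (auto simp: V_def)
    then have "vars_below C (P (b, m))" by (fastforce simp: vars_below_def C_def)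
    then show ?thesis by (rule vars_below_mono) simp
  next
    case False
    then have "vars_below (\<bar>m\<bar> - 1) (P (b, m))" by (simp add: F_def)
    then show ?thesis by (rule vars_below_mono) simp
  qed
  then show ?thesis by (rule that)
qed

lemma eventually_cofinite_abs_ge: "\<forall>\<^sub>F n in cofinite. N \<le> \<bar>n :: int\<bar>"
proof -
  have "{n :: int. \<not> N \<le> \<bar>n\<bar>} \<subseteq> {-N..N}" by auto
  then show ?thesis
    unfolding eventually_cofinite by (rule finite_subset) simp
qed

lemma Der_w_zero: "der_zero \<in> Der_w"
  by (simp add: Der_w_def widening_gap_iff_eventually vars_below_def)

lemma Der_w_add:
  assumes "P \<in> Der_w" "Q \<in> Der_w"
  shows "der_add P Q \<in> Der_w"
  unfolding Der_w_def widening_gap_iff_eventually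
proof (intro CollectI allI impI)
  fix K :: int assume "1 \<le> K"
  with assms have "\<forall>\<^sub>F n in cofinite. \<forall>a. vars_below (\<bar>n\<bar> - K) (P (a, n))"
    and "\<forall>\<^sub>F n in cofinite. \<forall>a. vars_below (\<bar>n\<bar> - K) (Q (a, n))"
    by (simp_all add: Der_w_def widening_gap_iff_eventually)
  then show "\<forall>\<^sub>F n in cofinite. \<forall>a. vars_below (\<bar>n\<bar> - K) (der_add P Q (a, n))"
    by eventually_elim (simp add: vars_below_add)
qed

lemma Der_w_scale:
  assumes "P \<in> Der_w"
  shows "der_scale c P \<in> Der_w"
  unfolding Der_w_def widening_gap_iff_eventually
proof (intro CollectI allI impI)
  fix K :: int assume "1 \<le> K"
  with assms have "\<forall>\<^sub>F n in cofinite. \<forall>a. vars_below (\<bar>n\<bar> - K) (P (a, n))"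
    by (simp add: Der_w_def widening_gap_iff_eventually)
  then show "\<forall>\<^sub>F n in cofinite. \<forall>a. vars_below (\<bar>n\<bar> - K) (der_scale c P (a, n))"
    by eventually_elim (simp add: vars_below_const_pol_mult)
qed

lemma Der_w_bracket:
  fixes P Q :: "'i::finite der"
  assumes "P \<in> Der_w" "Q \<in> Der_w"
  shows "der_bracket P Q \<in> Der_w"
proof -
  obtain CP where CP: "\<And>b m. vars_below (max CP \<bar>m\<bar>) (P (b, m))"
    using assms(1) widening_gap_vars_bound by (auto simp: Der_w_def)
  obtain CQ where CQ: "\<And>b m. vars_below (max CQ \<bar>m\<bar>) (Q (b, m))"
    using assms(2) widening_gap_vars_bound by (auto simp: Der_w_def)
  define C where "C = max CP CQ"
  have P: "vars_below (max C \<bar>m\<bar>) (P (b, m))" and Q: "vars_below (max C \<bar>m\<bar>) (Q (b, m))"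
    for b m
    using CP[where b = b and m = m] CQ[where b = b and m = m]
    by (auto simp: C_def intro: vars_below_mono)
  show ?thesis
    unfolding Der_w_def widening_gap_iff_eventually
  proof (intro CollectI allI impI)
    fix K :: int assume "1 \<le> K"
    with assms have "\<forall>\<^sub>F n in cofinite. \<forall>a. vars_below (\<bar>n\<bar> - K) (P (a, n))"
      and "\<forall>\<^sub>F n in cofinite. \<forall>a. vars_below (\<bar>n\<bar> - K) (Q (a, n))"
      by (simp_all add: Der_w_def widening_gap_iff_eventually)
    moreover have "\<forall>\<^sub>F n in cofinite. C + K \<le> \<bar>n\<bar>"
      by (rule eventually_cofinite_abs_ge)
    ultimately show "\<forall>\<^sub>F n in cofinite. \<forall>a. vars_below (\<bar>n\<bar> - K) (der_bracket P Q (a, n))"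
    proof eventually_elim
      case (elim n)
      show ?case
      proof
        fix a
        have "vars_below (\<bar>n\<bar> - K) (der_apply P (Q (a, n)))"
          using elim(2,3) P by (intro vars_below_der_apply[where C = C]) auto
        moreover have "vars_below (\<bar>n\<bar> - K) (der_apply Q (P (a, n)))"
          using elim(1,3) Q by (intro vars_below_der_apply[where C = C]) auto
        ultimately show "vars_below (\<bar>n\<bar> - K) (der_bracket P Q (a, n))"
          by (simp add: der_bracket_eq vars_below_diff)
      qed
    qed
  qed
qed

theorem lemma3p5:
  fixes dummy :: "'i::finite itself"
  shows
    \<comment> \<open>well-definedness: each coefficient is a finite sum\<close>
    "(\<forall>(P::'i der) Q an. finite {bm. bracket_term P Q an bm \<noteq> 0})
     \<comment> \<open>bilinearity\<close>
     \<and> (\<forall>(P::'i der) Q R. der_bracket (der_add P Q) R = der_add (der_bracket P R) (der_bracket Q R))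
     \<and> (\<forall>(P::'i der) Q R. der_bracket P (der_add Q R) = der_add (der_bracket P Q) (der_bracket P R))
     \<and> (\<forall>c (P::'i der) Q. der_bracket (der_scale c P) Q = der_scale c (der_bracket P Q))
     \<and> (\<forall>c (P::'i der) Q. der_bracket P (der_scale c Q) = der_scale c (der_bracket P Q))
     \<comment> \<open>alternating\<close>
     \<and> (\<forall>P::'i der. der_bracket P P = der_zero)
     \<comment> \<open>Jacobi identity\<close>
     \<and> (\<forall>(P::'i der) Q R.
          der_add (der_add (der_bracket P (der_bracket Q R)) (der_bracket Q (der_bracket R P)))
                  (der_bracket R (der_bracket P Q)) = der_zero)
     \<comment> \<open>Der_w is a Lie subalgebra\<close>
     \<and> (der_zero :: 'i der) \<in> Der_w
     \<and> (\<forall>P\<in>(Der_w :: 'i der set). \<forall>Q\<in>Der_w. der_add P Q \<in> Der_w)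
     \<and> (\<forall>c. \<forall>P\<in>(Der_w :: 'i der set). der_scale c P \<in> Der_w)
     \<and> (\<forall>P\<in>(Der_w :: 'i der set). \<forall>Q\<in>Der_w. der_bracket P Q \<in> Der_w)"
  by (intro conjI allI ballI)
    (assumption | rule finite_bracket_term_support der_bracket_add_left der_bracket_add_right
      der_bracket_scale_left der_bracket_scale_right der_bracket_self der_bracket_jacobi
      Der_w_zero Der_w_add Der_w_scale Der_w_bracket)+

end
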